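(* Let $X\subset\mathbb{R}^n$ be a finite set of points, let $\mathcal O$ be an order ideal and let $\mathcal B$ be an $\mathcal O$-border basis of the vanishing ideal $\mathcal I(X)$. Then for every $g\in\mathcal B$, $\mathfrak n_{\mathrm g}(g;X)\neq\boldsymbol 0$.
   Context: $\mathcal I(X)=\{g\in\mathbb{R}[x_1,\ldots,x_n]:g(\boldsymbol x)=0\ \forall\boldsymbol x\in X\}$. A term is a monomial $x_1^{a_1}\cdots x_n^{a_n}$. An order ideal $\mathcal O$ is a finite set of terms such that every term dividing an element of $\mathcal O$ belongs to $\mathcal O$. Its border is $\partial\mathcal O=\{x_ko:o\in\mathcal O,k=1,\ldots,n\}\setminus\mathcal O$. An $\mathcal O$-border basis of $\mathcal I(X)$ is a set of polynomials $\mathcal B\subset\mathcal I(X)$ generating $\mathcal I(X)$, each of the form $g=b-\sum_{o\in\mathcal O}c_oo$ with $b\in\partial\mathcal O$ and $c_o\in\mathbb R$, such that the residue classes of the terms of $\mathcal O$ form a basis of $\mathbb{R}[x_1,\ldots,x_n]/\mathcal I(X)$ (equivalently, the evaluation vectors of the terms of $\mathcal O$ at $X$ are linearly independent and span $\mathbb{R}^{|X|}$). $\mathfrak n_{\mathrm g}(g;X)=\mathrm{vec}(\nabla g(X))$, where $\nabla g(X)$ is the $|X|\times n$ matrix whose rows are the gradients of $g$ at the points of $X$. *)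

theory Defs
  imports "HOL-Analysis.Analysis" "HOL-Library.Poly_Mapping"
begin

text \<open>Multivariate real polynomials in the variables indexed by the finite type 'n:
  terms (monomials) are exponent vectors 'n => nat (finitely supported), polynomials are finitely
  supported maps from terms to real coefficients (with convolution product).\<close>

type_synonym 'n "term" = "'n \<Rightarrow>\<^sub>0 nat"
type_synonym 'n mpoly = "'n term \<Rightarrow>\<^sub>0 real"

definition term_poly :: "'n term \<Rightarrow> 'n mpoly" where
  "term_poly t = Poly_Mapping.single t 1"

definition term_eval :: "'n::finite term \<Rightarrow> real ^ 'n \<Rightarrow> real" where
  "term_eval t x = (\<Prod>i\<in>UNIV. (x $ i) ^ Poly_Mapping.lookup t i)"

definition peval :: "'n::finite mpoly \<Rightarrow> real ^ 'n \<Rightarrow> real" where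
  "peval p x = (\<Sum>t\<in>Poly_Mapping.keys p. Poly_Mapping.lookup p t * term_eval t x)"

definition vanishing_ideal :: "(real ^ 'n::finite) set \<Rightarrow> 'n mpoly set" where
  "vanishing_ideal X = {g. \<forall>x\<in>X. peval g x = 0}"

definition ideal_gen :: "'n mpoly set \<Rightarrow> 'n mpoly set" where
  "ideal_gen B = {p. \<exists>F h. finite F \<and> F \<subseteq> B \<and> p = (\<Sum>g\<in>F. h g * g)}"

definition term_dvd :: "'n term \<Rightarrow> 'n term \<Rightarrow> bool" where
  "term_dvd s t \<longleftrightarrow> (\<forall>i. Poly_Mapping.lookup s i \<le> Poly_Mapping.lookup t i)"

definition order_ideal :: "'n term set \<Rightarrow> bool" where
  "order_ideal \<O> \<longleftrightarrow> finite \<O> \<and> (\<forall>t\<in>\<O>. \<forall>s. term_dvd s t \<longrightarrow> s \<in> \<O>)"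

definition border :: "'n term set \<Rightarrow> 'n term set" where
  "border \<O> = {Poly_Mapping.single k 1 + u | u k. u \<in> \<O>} - \<O>"

definition is_border_basis :: "'n::finite term set \<Rightarrow> 'n mpoly set \<Rightarrow> (real ^ 'n) set \<Rightarrow> bool" where
  "is_border_basis \<O> B X \<longleftrightarrow>
     B \<subseteq> vanishing_ideal X \<and> ideal_gen B = vanishing_ideal X \<and>
     (\<forall>g\<in>B. \<exists>b\<in>border \<O>. \<exists>c. g = term_poly b - (\<Sum>u\<in>\<O>. Poly_Mapping.single u (c u))) \<and>
     (\<forall>c. (\<forall>x\<in>X. (\<Sum>u\<in>\<O>. c u * term_eval u x) = 0) \<longrightarrow> (\<forall>u\<in>\<O>. c u = 0)) \<and>
     (\<forall>v. \<exists>c. \<forall>x\<in>X. (\<Sum>u\<in>\<O>. c u * term_eval u x) = v x)"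

definition pgrad :: "'n::finite mpoly \<Rightarrow> real ^ 'n \<Rightarrow> real ^ 'n" where
  "pgrad p x = (\<chi> k. deriv (\<lambda>s. peval p (\<chi> i. if i = k then s else x $ i)) (x $ k))"

text \<open>n_g(g;X) = vec(grad g(X)) is the zero vector iff every gradient at every point of X is 0.
  We represent it as the matrix-valued map X \<rightarrow> R^n (row x is the gradient at x).\<close>
definition ngrad_zero :: "'n::finite mpoly \<Rightarrow> (real ^ 'n) set \<Rightarrow> bool" where
  "ngrad_zero g X \<longleftrightarrow> (\<forall>x\<in>X. \<forall>k. pgrad g x $ k = 0)"

end

theory Submission
  imports Defs
begin

text \<open>Write a border basis element as \<open>g = b - (\<Sum>u\<in>\<O>. c u * u)\<close> with \<open>b = x\<^sub>k * o\<^sub>0\<close>,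
  \<open>o\<^sub>0 \<in> \<O>\<close> and \<open>b \<notin> \<O>\<close>. The partial derivative of \<open>b\<close> along \<open>x\<^sub>k\<close> is a nonzero multiple of \<open>o\<^sub>0\<close>,
  while that of \<open>u \<in> \<O>\<close> is a multiple of \<open>u / x\<^sub>k\<close>, which lies in \<open>\<O>\<close> because \<open>\<O>\<close> is closed
  under division, and differs from \<open>o\<^sub>0\<close> because \<open>b \<notin> \<O>\<close>. So this derivative of \<open>g\<close> is a
  combination of the terms of \<open>\<O>\<close> in which \<open>o\<^sub>0\<close> has a nonzero coefficient; as these terms are
  linearly independent on \<open>X\<close>, it cannot vanish on all of \<open>X\<close>.\<close>

lemma peval_eq_sum:
  assumes "finite S" "Poly_Mapping.keys p \<subseteq> S"
  shows "peval p x = (\<Sum>t\<in>S. Poly_Mapping.lookup p t * term_eval t x)"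
  unfolding peval_def
  by (rule sum.mono_neutral_left) (use assms in \<open>auto simp: in_keys_iff\<close>)

lemma term_eval_remove:
  "term_eval t y = (y $ k) ^ Poly_Mapping.lookup t k *
     (\<Prod>i\<in>UNIV - {k}. (y $ i) ^ Poly_Mapping.lookup t i)"
  unfolding term_eval_def by (simp add: prod.remove)

lemma has_real_derivative_term_eval:
  fixes x :: "real ^ 'n::finite"
  shows "((\<lambda>s. term_eval t (\<chi> i. if i = k then s else x $ i)) has_real_derivative
     real (Poly_Mapping.lookup t k) * term_eval (t - Poly_Mapping.single k 1) x) (at (x $ k))"
  \<comment> \<open>if \<open>x\<^sub>k\<close> does not occur in \<open>t\<close>, the truncated difference \<open>t - x\<^sub>k\<close> is \<open>t\<close>, but its factor is 0\<close>
proof -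
  define P where "P = (\<Prod>i\<in>UNIV - {k}. (x $ i) ^ Poly_Mapping.lookup t i)"
  have line: "term_eval t (\<chi> i. if i = k then s else x $ i) = s ^ Poly_Mapping.lookup t k * P" for s
    unfolding term_eval_remove[of t _ k] P_def
    by (intro arg_cong2[where f="(*)"]) (auto intro!: prod.cong)
  have "(\<Prod>i\<in>UNIV - {k}. (x $ i) ^ Poly_Mapping.lookup (t - Poly_Mapping.single k 1) i) = P"
    unfolding P_def by (intro prod.cong) (auto simp: lookup_minus lookup_single_not_eq)
  then have lowered:
    "term_eval (t - Poly_Mapping.single k 1) x = (x $ k) ^ (Poly_Mapping.lookup t k - 1) * P"
    unfolding term_eval_remove[of _ _ k] by (simp add: lookup_minus)
  have "((\<lambda>s. s ^ Poly_Mapping.lookup t k * P) has_real_derivative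
      real (Poly_Mapping.lookup t k) * (x $ k) ^ (Poly_Mapping.lookup t k - 1) * P) (at (x $ k))"
    by (auto intro!: derivative_eq_intros)
  then show ?thesis unfolding line lowered by (simp add: mult.assoc)
qed

lemma pgrad_nth_eq_sum:
  fixes x :: "real ^ 'n::finite"
  assumes "finite S" "Poly_Mapping.keys p \<subseteq> S"
  shows "pgrad p x $ k = (\<Sum>t\<in>S. Poly_Mapping.lookup p t *
     (real (Poly_Mapping.lookup t k) * term_eval (t - Poly_Mapping.single k 1) x))"
proof -
  have "((\<lambda>s. peval p (\<chi> i. if i = k then s else x $ i)) has_real_derivative
      (\<Sum>t\<in>S. Poly_Mapping.lookup p t *
        (real (Poly_Mapping.lookup t k) * term_eval (t - Poly_Mapping.single k 1) x))) (at (x $ k))"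
    unfolding peval_eq_sum[OF assms]
    by (intro DERIV_sum DERIV_cmult has_real_derivative_term_eval)
  then show ?thesis
    unfolding pgrad_def by (simp add: DERIV_imp_deriv)
qed

lemma lookup_border_form:
  assumes "finite \<O>"
  shows "Poly_Mapping.lookup (term_poly b - (\<Sum>u\<in>\<O>. Poly_Mapping.single u (c u))) t =
     (if t = b then 1 else 0) - (if t \<in> \<O> then c t else 0)"
  unfolding term_poly_def lookup_minus lookup_sum lookup_single
  using assms by (auto simp: when_def)

lemma keys_border_form:
  assumes "finite \<O>"
  shows "Poly_Mapping.keys (term_poly b - (\<Sum>u\<in>\<O>. Poly_Mapping.single u (c u))) \<subseteq> insert b \<O>"
  using lookup_border_form[OF assms] by (auto simp: in_keys_iff split: if_splits)

lemma order_ideal_image_add_single: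
  assumes "order_ideal \<O>"
  shows "(\<lambda>w. w + Poly_Mapping.single k 1) ` {w\<in>\<O>. w + Poly_Mapping.single k 1 \<in> \<O>}
     = {u\<in>\<O>. Poly_Mapping.lookup u k \<noteq> 0}"
proof (intro equalityI subsetI)
  fix u assume "u \<in> (\<lambda>w. w + Poly_Mapping.single k 1) ` {w\<in>\<O>. w + Poly_Mapping.single k 1 \<in> \<O>}"
  then show "u \<in> {u\<in>\<O>. Poly_Mapping.lookup u k \<noteq> 0}"
    by (auto simp: lookup_add)
next
  fix u assume u: "u \<in> {u\<in>\<O>. Poly_Mapping.lookup u k \<noteq> 0}"
  have "u - Poly_Mapping.single k 1 \<in> \<O>"
    using u assms unfolding order_ideal_def term_dvd_def by (auto simp: lookup_minus)
  moreover have "u = (u - Poly_Mapping.single k 1) + Poly_Mapping.single k 1"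
    using u by (intro poly_mapping_eqI) (auto simp: lookup_add lookup_minus lookup_single when_def)
  ultimately show "u \<in> (\<lambda>w. w + Poly_Mapping.single k 1) ` {w\<in>\<O>. w + Poly_Mapping.single k 1 \<in> \<O>}"
    using u by (intro image_eqI[of _ _ "u - Poly_Mapping.single k 1"]) auto
qed

definition partial_coeffs :: "'n term set \<Rightarrow> 'n \<Rightarrow> ('n term \<Rightarrow> real) \<Rightarrow> 'n term \<Rightarrow> real" where
  "partial_coeffs \<O> k c w =
     (if w + Poly_Mapping.single k 1 \<in> \<O>
      then c (w + Poly_Mapping.single k 1) * real (Poly_Mapping.lookup (w + Poly_Mapping.single k 1) k)
      else 0)"

lemma sum_partial_terms_order_ideal:
  assumes "order_ideal \<O>"
  shows "(\<Sum>u\<in>\<O>. c u * (real (Poly_Mapping.lookup u k) * term_eval (u - Poly_Mapping.single k 1) x)) =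
     (\<Sum>w\<in>\<O>. partial_coeffs \<O> k c w * term_eval w x)"
    (is "?lhs = ?rhs")
proof -
  let ?ek = "Poly_Mapping.single k 1"
  have fin: "finite \<O>" using assms by (simp add: order_ideal_def)
  have "?rhs = (\<Sum>w\<in>{w\<in>\<O>. w + ?ek \<in> \<O>}.
      c (w + ?ek) * real (Poly_Mapping.lookup (w + ?ek) k) * term_eval w x)"
    unfolding partial_coeffs_def sum.inter_filter[OF fin] by (rule sum.cong) auto
  also have "\<dots> = (\<Sum>u\<in>(\<lambda>w. w + ?ek) ` {w\<in>\<O>. w + ?ek \<in> \<O>}.
      c u * (real (Poly_Mapping.lookup u k) * term_eval (u - ?ek) x))"
    by (subst sum.reindex) (simp_all add: inj_on_def mult.assoc)
  also have "\<dots> = ?lhs"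
    unfolding order_ideal_image_add_single[OF assms] using fin by (intro sum.mono_neutral_left) auto
  finally show ?thesis by simp
qed

lemma pgrad_border_form_in_span:
  fixes c :: "'n::finite term \<Rightarrow> real"
  assumes "order_ideal \<O>" and "o\<^sub>0 \<in> \<O>" and "b = Poly_Mapping.single k 1 + o\<^sub>0" and "b \<notin> \<O>"
  obtains e where "e o\<^sub>0 \<noteq> 0"
    and "\<And>x. pgrad (term_poly b - (\<Sum>u\<in>\<O>. Poly_Mapping.single u (c u))) x $ k =
           (\<Sum>w\<in>\<O>. e w * term_eval w x)"
proof -
  let ?ek = "Poly_Mapping.single k 1"
  let ?g = "term_poly b - (\<Sum>u\<in>\<O>. Poly_Mapping.single u (c u))"
  define e where
    "e w = (if w = o\<^sub>0 then real (Poly_Mapping.lookup b k) else 0) - partial_coeffs \<O> k c w" for w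
  have fin: "finite \<O>" using assms(1) by (simp add: order_ideal_def)
  have "partial_coeffs \<O> k c o\<^sub>0 = 0"
    unfolding partial_coeffs_def using assms(3,4) by (simp add: add.commute)
  then have "e o\<^sub>0 \<noteq> 0" unfolding e_def using assms(3) by (simp add: lookup_add)
  moreover have "pgrad ?g x $ k = (\<Sum>w\<in>\<O>. e w * term_eval w x)" for x
  proof -
    have "pgrad ?g x $ k = (\<Sum>t\<in>insert b \<O>. Poly_Mapping.lookup ?g t *
        (real (Poly_Mapping.lookup t k) * term_eval (t - ?ek) x))"
      using fin keys_border_form[OF fin] by (intro pgrad_nth_eq_sum) auto
    also have "\<dots> = real (Poly_Mapping.lookup b k) * term_eval o\<^sub>0 x -
        (\<Sum>u\<in>\<O>. c u * (real (Poly_Mapping.lookup u k) * term_eval (u - ?ek) x))"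
    proof -
      have "u \<noteq> b" if "u \<in> \<O>" for u using that assms(4) by blast
      then show ?thesis
        using fin assms(3,4) by (simp add: lookup_border_form sum_negf[symmetric] cong: sum.cong)
    qed
    also have "\<dots> = (\<Sum>w\<in>\<O>. e w * term_eval w x)"
      unfolding sum_partial_terms_order_ideal[OF assms(1)] e_def
      using fin assms(2)
      by (simp add: left_diff_distrib sum_subtractf sum.delta if_distrib[where f = "\<lambda>z. z * _"]
          cong: if_cong)
    finally show ?thesis .
  qed
  ultimately show thesis using that by blast
qed

theorem proposition4:
  fixes X :: "(real ^ 'n::finite) set" and \<O> :: "'n term set" and B :: "'n mpoly set"
  assumes "finite X"
    and "order_ideal \<O>"
    and "is_border_basis \<O> B X"
    and "g \<in> B"
  shows "\<not> ngrad_zero g X"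
proof
  assume grad_zero: "ngrad_zero g X"
  obtain b c where "b \<in> border \<O>" and g: "g = term_poly b - (\<Sum>u\<in>\<O>. Poly_Mapping.single u (c u))"
    using assms(3,4) unfolding is_border_basis_def by blast
  then obtain k o\<^sub>0 where "o\<^sub>0 \<in> \<O>" "b = Poly_Mapping.single k 1 + o\<^sub>0" "b \<notin> \<O>"
    unfolding border_def by blast
  with assms(2) obtain e where "e o\<^sub>0 \<noteq> 0" and grad: "\<And>x. pgrad g x $ k = (\<Sum>w\<in>\<O>. e w * term_eval w x)"
    unfolding g by (rule pgrad_border_form_in_span[where c = c]) blast
  have "\<forall>x\<in>X. (\<Sum>w\<in>\<O>. e w * term_eval w x) = 0"
    using grad_zero unfolding ngrad_zero_def grad[symmetric] by blast
  then have "\<forall>w\<in>\<O>. e w = 0"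
    using assms(3) unfolding is_border_basis_def by blast
  with \<open>o\<^sub>0 \<in> \<O>\<close> \<open>e o\<^sub>0 \<noteq> 0\<close> show False by blast
qed

end
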